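(* Let $W:\mathcal{X}\to\mathcal{Y}$ be a channel such that $W(\mathcal{X})=\{W_x:x\in\mathcal{X}\}\subset\mathcal{P}(\mathcal{Y})$ contains a continuous curve, i.e. there are inputs $x_t$, $t\in[0,1]$, such that $t\mapsto W_{x_t}$ is continuous with respect to the total variation distance and $W_{x_0}\neq W_{x_1}$. Then $\dot{C}_{\mathrm{DI}}(W)\ge\frac14$.
   Context: Here $\mathcal{X}$ and $\mathcal{Y}$ are measurable spaces (no finiteness assumption on $\mathcal{Y}$), and a channel is a measurable map $x\mapsto W_x$ into the probability measures $\mathcal{P}(\mathcal{Y})$ on $\mathcal{Y}$; the total variation distance is $\sup_{\mathcal{A}}|P(\mathcal{A})-Q(\mathcal{A})|$ over measurable $\mathcal{A}$. $W_{x^n}$ is the product measure $W_{x_1}\otimes\cdots\otimes W_{x_n}$ on $\mathcal{Y}^n$. An $(n,N,\lambda_1,\lambda_2)$-DI code is a family $\{(u_j,\mathcal{E}_j):j\in[N]\}$, $u_j\in\mathcal{X}^n$, $\mathcal{E}_j\subset\mathcal{Y}^n$ measurable, with $W_{u_j}(\mathcal{E}_j)\ge1-\lambda_1$ for all $j$ and $W_{u_j}(\mathcal{E}_k)\le\lambda_2$ for $j\ne k$; $N_{\mathrm{DI}}(n,\lambda_1,\lambda_2)$ is the largest such $N$. Logarithms base 2; $\dot{C}_{\mathrm{DI}}(W)=\inf_{\lambda_1,\lambda_2>0}\liminf_{n\to\infty}\frac{1}{n\log n}\log N_{\mathrm{DI}}(n,\lambda_1,\lambda_2)$. *)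

theory Defs
  imports "HOL-Probability.Probability"
begin

definition channel :: "'a measure \<Rightarrow> 'b measure \<Rightarrow> ('a \<Rightarrow> 'b measure) \<Rightarrow> bool" where
  "channel MX MY W \<longleftrightarrow> W \<in> measurable MX (prob_algebra MY)"

definition tv_dist :: "'b measure \<Rightarrow> 'b measure \<Rightarrow> 'b measure \<Rightarrow> real" where
  "tv_dist MY P Q = (SUP A \<in> sets MY. \<bar>measure P A - measure Q A\<bar>)"

text \<open>Product output distribution W_{x^n} on Y^n, for a codeword u in X^n
(u given as an extensional function on {..<n}).\<close>
definition prod_out :: "('a \<Rightarrow> 'b measure) \<Rightarrow> nat \<Rightarrow> (nat \<Rightarrow> 'a) \<Rightarrow> (nat \<Rightarrow> 'b) measure" where
  "prod_out W n u = PiM {..<n} (\<lambda>i. W (u i))"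

definition DI_code :: "'a measure \<Rightarrow> 'b measure \<Rightarrow> ('a \<Rightarrow> 'b measure) \<Rightarrow> nat \<Rightarrow> nat
    \<Rightarrow> real \<Rightarrow> real \<Rightarrow> (nat \<Rightarrow> nat \<Rightarrow> 'a) \<Rightarrow> (nat \<Rightarrow> (nat \<Rightarrow> 'b) set) \<Rightarrow> bool" where
  "DI_code MX MY W n N l1 l2 u E \<longleftrightarrow>
     (\<forall>j<N. u j \<in> {..<n} \<rightarrow>\<^sub>E space MX \<and> E j \<in> sets (PiM {..<n} (\<lambda>_. MY))) \<and>
     (\<forall>j<N. measure (prod_out W n (u j)) (E j) \<ge> 1 - l1) \<and>
     (\<forall>j<N. \<forall>k<N. j \<noteq> k \<longrightarrow> measure (prod_out W n (u j)) (E k) \<le> l2)"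

definition N_DI :: "'a measure \<Rightarrow> 'b measure \<Rightarrow> ('a \<Rightarrow> 'b measure) \<Rightarrow> nat \<Rightarrow> real \<Rightarrow> real \<Rightarrow> enat" where
  "N_DI MX MY W n l1 l2 = Sup {enat N | N. \<exists>u E. DI_code MX MY W n N l1 l2 u E}"

definition DI_rate :: "'a measure \<Rightarrow> 'b measure \<Rightarrow> ('a \<Rightarrow> 'b measure) \<Rightarrow> nat \<Rightarrow> real \<Rightarrow> real \<Rightarrow> ereal" where
  "DI_rate MX MY W n l1 l2 =
     (case N_DI MX MY W n l1 l2 of
        enat N \<Rightarrow> ereal (log 2 (real N) / (real n * log 2 (real n)))
      | \<infinity> \<Rightarrow> \<infinity>)"

definition C_DI_dot :: "'a measure \<Rightarrow> 'b measure \<Rightarrow> ('a \<Rightarrow> 'b measure) \<Rightarrow> ereal" where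
  "C_DI_dot MX MY W =
     (INF l \<in> {(l1, l2). l1 > 0 \<and> l2 > 0}. liminf (\<lambda>n. DI_rate MX MY W n (fst l) (snd l)))"

end

theory Submission
  imports Defs "HOL-Real_Asymp.Real_Asymp"
begin

(* Choose a measurable set A with W_{x_0}(A) different from W_{x_1}(A). Since
   |P(A) - Q(A)| is at most the total variation distance, t -> W_{x_t}(A) is continuous, so by the
   intermediate value theorem every p in some interval [a,b] is attained as W_{xi p}(A): the
   channel contains a family of Bernoulli channels with parameters filling [a,b].
   A word c in {0..M-1}^n is sent as the inputs with parameters q_i = a + (b-a) c_i / M and
   identified by thresholding the statistic sum_i (1 - 2 q_i)(1_A(y_i) - q_i), which has mean 0 under
   c and mean sum_i (q'_i - q_i)^2 >= R ((b-a)/M)^2 under any c' sharing the first two moments of c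
   and differing from it in at least R places; Hoeffding's inequality bounds both error probabilities.
   Pigeonholing on the two moments and a greedy choice in the Hamming graph give at least
   M^n / n^(3R+7) such codewords. With M ~ n^(1/4-e), R ~ n^(1-e) and threshold ~ n^(1/2+e)
   both errors vanish and log N >= (1/4 - e) n log n - o(n log n). *)

lemma indep_vars_PiM_components:
  assumes "finite I" "I \<noteq> {}" "\<And>i. i \<in> I \<Longrightarrow> prob_space (M i)"
  shows "prob_space.indep_vars (PiM I M) M (\<lambda>i \<omega>. \<omega> i) I"
proof -
  interpret P: prob_space "PiM I M" by (rule prob_space_PiM) (use assms in auto)
  have "distr (PiM I M) (PiM I M) (\<lambda>\<omega>. restrict \<omega> I) = PiM I M"
    by (subst distr_cong[where g = "\<lambda>\<omega>. \<omega>"]) (auto simp: space_PiM PiE_def extensional_restrict)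
  moreover have "PiM I (\<lambda>i. distr (PiM I M) (M i) (\<lambda>\<omega>. \<omega> i)) = PiM I M"
    by (rule PiM_cong) (auto intro: distr_PiM_component assms)
  ultimately show ?thesis
    by (subst P.indep_vars_iff_distr_eq_PiM') (use assms in auto)
qed

lemma
  fixes P :: "'i \<Rightarrow> 'b measure" and f :: "'i \<Rightarrow> 'b \<Rightarrow> real"
  assumes I: "finite I" "I \<noteq> {}" and P: "\<And>i. i \<in> I \<Longrightarrow> prob_space (P i)"
    and f: "\<And>i. i \<in> I \<Longrightarrow> f i \<in> borel_measurable (P i)"
    and f_bounded: "\<And>i y. i \<in> I \<Longrightarrow> y \<in> space (P i) \<Longrightarrow> \<bar>f i y\<bar> \<le> 1"
    and "\<epsilon> \<ge> 0"
  defines "\<mu> \<equiv> \<Sum>i\<in>I. integral\<^sup>L (P i) (f i)"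
  shows Hoeffding_PiM_ge: "measure (PiM I P) {\<omega> \<in> space (PiM I P). (\<Sum>i\<in>I. f i (\<omega> i)) \<ge> \<mu> + \<epsilon>}
           \<le> exp (- \<epsilon>\<^sup>2 / (2 * real (card I)))"
    and Hoeffding_PiM_le: "measure (PiM I P) {\<omega> \<in> space (PiM I P). (\<Sum>i\<in>I. f i (\<omega> i)) \<le> \<mu> - \<epsilon>}
           \<le> exp (- \<epsilon>\<^sup>2 / (2 * real (card I)))"
proof -
  interpret Q: prob_space "PiM I P" by (rule prob_space_PiM) (use P in auto)
  have indep: "Q.indep_vars (\<lambda>_. borel) (\<lambda>i \<omega>. f i (\<omega> i)) I"
    by (rule Q.indep_vars_compose2[OF indep_vars_PiM_components[OF I P]]) (use f in auto)
  have expectation: "Q.expectation (\<lambda>\<omega>. f i (\<omega> i)) = integral\<^sup>L (P i) (f i)" if "i \<in> I" for i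
  proof -
    have "integral\<^sup>L (P i) (f i) = integral\<^sup>L (distr (PiM I P) (P i) (\<lambda>\<omega>. \<omega> i)) (f i)"
      using distr_PiM_component[of I P i] P that by simp
    also have "\<dots> = Q.expectation (\<lambda>\<omega>. f i (\<omega> i))"
      by (rule integral_distr) (use f that in auto)
    finally show ?thesis ..
  qed
  have bounded: "AE \<omega> in PiM I P. f i (\<omega> i) \<in> {-1..1}" if "i \<in> I" for i
    using f_bounded[OF that] that by (intro AE_I2) (auto simp: space_PiM abs_le_iff)
  interpret H: Hoeffding_ineq "PiM I P" I "\<lambda>i \<omega>. f i (\<omega> i)" "\<lambda>_. -1" "\<lambda>_. 1" \<mu>
    by unfold_locales (use I indep bounded in \<open>auto simp: \<mu>_def expectation\<close>)
  have width: "(\<Sum>i\<in>I. (1 - (-1::real))\<^sup>2) = 4 * card I" by simp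
  show "measure (PiM I P) {\<omega> \<in> space (PiM I P). (\<Sum>i\<in>I. f i (\<omega> i)) \<ge> \<mu> + \<epsilon>}
           \<le> exp (- \<epsilon>\<^sup>2 / (2 * real (card I)))"
    using H.Hoeffding_ineq_ge[OF \<open>\<epsilon> \<ge> 0\<close>] I unfolding width by (simp add: card_gt_0_iff)
  show "measure (PiM I P) {\<omega> \<in> space (PiM I P). (\<Sum>i\<in>I. f i (\<omega> i)) \<le> \<mu> - \<epsilon>}
           \<le> exp (- \<epsilon>\<^sup>2 / (2 * real (card I)))"
    using H.Hoeffding_ineq_le[OF \<open>\<epsilon> \<ge> 0\<close>] I unfolding width by (simp add: card_gt_0_iff)
qed

(* Equals sum_i (1_A(y_i) - p_i)^2 - p_i (1 - p_i): the squared distance of the observed indicators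
   from p, centred to have mean 0 when p is the true parameter vector. *)
definition test_stat :: "'b set \<Rightarrow> (nat \<Rightarrow> real) \<Rightarrow> nat \<Rightarrow> (nat \<Rightarrow> 'b) \<Rightarrow> real" where
  "test_stat A p n \<omega> = (\<Sum>i<n. (1 - 2 * p i) * (indicator A (\<omega> i) - p i))"

lemma test_stat_measurable [measurable]:
  assumes [measurable]: "A \<in> sets MY"
  shows "test_stat A p n \<in> borel_measurable (PiM {..<n} (\<lambda>_. MY))"
  unfolding test_stat_def by measurable

lemma
  fixes P :: "nat \<Rightarrow> 'b measure"
  assumes "n > 0" and P: "\<And>i. i < n \<Longrightarrow> prob_space (P i)" "\<And>i. i < n \<Longrightarrow> sets (P i) = sets MY"
    and A: "A \<in> sets MY" and p: "\<And>i. i < n \<Longrightarrow> p i \<in> {0..1}" and "\<theta> \<ge> 0"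
  defines "\<mu> \<equiv> \<Sum>i<n. (1 - 2 * p i) * (measure (P i) A - p i)"
  shows test_stat_ge_prob_le: "measure (PiM {..<n} P) {\<omega> \<in> space (PiM {..<n} P). test_stat A p n \<omega> \<ge> \<mu> + \<theta>}
           \<le> exp (- \<theta>\<^sup>2 / (2 * real n))"
    and test_stat_le_prob_le: "measure (PiM {..<n} P) {\<omega> \<in> space (PiM {..<n} P). test_stat A p n \<omega> \<le> \<mu> - \<theta>}
           \<le> exp (- \<theta>\<^sup>2 / (2 * real n))"
proof -
  define f where "f i y = (1 - 2 * p i) * (indicator A y - p i)" for i and y :: 'b
  have f_measurable: "f i \<in> borel_measurable (P i)" if "i < n" for i
    unfolding f_def using A P(2)[OF that] by measurable
  have f_bounded: "\<bar>f i y\<bar> \<le> 1" if "i < n" for i y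
  proof -
    have "\<bar>1 - 2 * p i\<bar> \<le> 1" "\<bar>indicator A y - p i\<bar> \<le> (1::real)"
      using p[OF that] by (auto simp: indicator_def)
    then show ?thesis unfolding f_def abs_mult by (intro mult_le_one) auto
  qed
  have integral_f: "integral\<^sup>L (P i) (f i) = (1 - 2 * p i) * (measure (P i) A - p i)" if "i < n" for i
  proof -
    interpret prob_space "P i" using P(1)[OF that] .
    have "A \<in> events" using A P(2)[OF that] by simp
    then have "expectation (\<lambda>y. indicator A y - p i) = prob A - p i"
      by (subst Bochner_Integration.integral_diff) (auto simp: prob_space emeasure_eq_measure)
    then show ?thesis by (simp add: f_def[abs_def])
  qed
  have \<mu>: "\<mu> = (\<Sum>i\<in>{..<n}. integral\<^sup>L (P i) (f i))"
    by (simp add: \<mu>_def integral_f)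
  have stat: "test_stat A p n \<omega> = (\<Sum>i\<in>{..<n}. f i (\<omega> i))" for \<omega>
    by (simp add: test_stat_def f_def)
  show "measure (PiM {..<n} P) {\<omega> \<in> space (PiM {..<n} P). test_stat A p n \<omega> \<ge> \<mu> + \<theta>}
           \<le> exp (- \<theta>\<^sup>2 / (2 * real n))"
    using Hoeffding_PiM_ge[of "{..<n}" P f \<theta>] P f_measurable f_bounded \<open>n > 0\<close> \<open>\<theta> \<ge> 0\<close>
    unfolding \<mu> stat by fastforce
  show "measure (PiM {..<n} P) {\<omega> \<in> space (PiM {..<n} P). test_stat A p n \<omega> \<le> \<mu> - \<theta>}
           \<le> exp (- \<theta>\<^sup>2 / (2 * real n))"
    using Hoeffding_PiM_le[of "{..<n}" P f \<theta>] P f_measurable f_bounded \<open>n > 0\<close> \<open>\<theta> \<ge> 0\<close>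
    unfolding \<mu> stat by fastforce
qed

lemma sets_PiM_eq_sets_PiM_const:
  assumes "\<And>i. i \<in> I \<Longrightarrow> sets (P i) = sets MY"
  shows "sets (PiM I P) = sets (PiM I (\<lambda>_. MY))" and "space (PiM I P) = space (PiM I (\<lambda>_. MY))"
proof -
  show sets: "sets (PiM I P) = sets (PiM I (\<lambda>_. MY))"
    by (rule sets_PiM_cong) (use assms in auto)
  show "space (PiM I P) = space (PiM I (\<lambda>_. MY))"
    using sets_eq_imp_space_eq[OF sets] .
qed

lemma test_stat_less_prob_ge:
  fixes P :: "nat \<Rightarrow> 'b measure"
  assumes "n > 0" and P: "\<And>i. i < n \<Longrightarrow> prob_space (P i)" "\<And>i. i < n \<Longrightarrow> sets (P i) = sets MY"
    and A: "A \<in> sets MY" and p: "\<And>i. i < n \<Longrightarrow> measure (P i) A = p i" and "\<theta> \<ge> 0"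
  shows "1 - exp (- \<theta>\<^sup>2 / (2 * real n))
           \<le> measure (PiM {..<n} P) {\<omega> \<in> space (PiM {..<n} (\<lambda>_. MY)). test_stat A p n \<omega> < \<theta>}"
proof -
  interpret Q: prob_space "PiM {..<n} P" by (rule prob_space_PiM) (use P in auto)
  note PiM_eq = sets_PiM_eq_sets_PiM_const[of "{..<n}" P MY]
  have p01: "p i \<in> {0..1}" if "i < n" for i
    using prob_space.prob_le_1[OF P(1)[OF that], of A] measure_nonneg[of "P i" A] p[OF that] by auto
  have mean: "(\<Sum>i<n. (1 - 2 * p i) * (measure (P i) A - p i)) = 0"
    by (simp add: p)
  have "{\<omega> \<in> space (PiM {..<n} P). test_stat A p n \<omega> \<ge> 0 + \<theta>}
      = space (PiM {..<n} P) - {\<omega> \<in> space (PiM {..<n} (\<lambda>_. MY)). test_stat A p n \<omega> < \<theta>}"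
    using PiM_eq P(2) by auto
  moreover have "{\<omega> \<in> space (PiM {..<n} (\<lambda>_. MY)). test_stat A p n \<omega> < \<theta>} \<in> Q.events"
    using PiM_eq P(2) A by auto
  ultimately show ?thesis
    using test_stat_ge_prob_le[where P = P and p = p, OF \<open>n > 0\<close> P A p01 \<open>\<theta> \<ge> 0\<close>] unfolding mean
    by (simp add: Q.prob_compl)
qed

lemma test_stat_less_prob_le:
  fixes P :: "nat \<Rightarrow> 'b measure"
  assumes "n > 0" and P: "\<And>i. i < n \<Longrightarrow> prob_space (P i)" "\<And>i. i < n \<Longrightarrow> sets (P i) = sets MY"
    and A: "A \<in> sets MY" and "\<And>i. i < n \<Longrightarrow> p i \<in> {0..1}" and "\<theta> \<ge> 0"
    and separated: "2 * \<theta> \<le> (\<Sum>i<n. (1 - 2 * p i) * (measure (P i) A - p i))"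
  shows "measure (PiM {..<n} P) {\<omega> \<in> space (PiM {..<n} (\<lambda>_. MY)). test_stat A p n \<omega> < \<theta>}
           \<le> exp (- \<theta>\<^sup>2 / (2 * real n))"
proof -
  interpret Q: prob_space "PiM {..<n} P" by (rule prob_space_PiM) (use P in auto)
  note PiM_eq = sets_PiM_eq_sets_PiM_const[of "{..<n}" P MY]
  define \<mu> where "\<mu> = (\<Sum>i<n. (1 - 2 * p i) * (measure (P i) A - p i))"
  have "{\<omega> \<in> space (PiM {..<n} (\<lambda>_. MY)). test_stat A p n \<omega> < \<theta>}
      \<subseteq> {\<omega> \<in> space (PiM {..<n} P). test_stat A p n \<omega> \<le> \<mu> - \<theta>}"
    using PiM_eq P(2) separated by (auto simp: \<mu>_def)
  then have "measure (PiM {..<n} P) {\<omega> \<in> space (PiM {..<n} (\<lambda>_. MY)). test_stat A p n \<omega> < \<theta>}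
      \<le> measure (PiM {..<n} P) {\<omega> \<in> space (PiM {..<n} P). test_stat A p n \<omega> \<le> \<mu> - \<theta>}"
    by (intro Q.finite_measure_mono) (use PiM_eq P(2) A in auto)
  also have "\<dots> \<le> exp (- \<theta>\<^sup>2 / (2 * real n))"
    unfolding \<mu>_def by (rule test_stat_le_prob_le) (use assms in auto)
  finally show ?thesis .
qed

lemma sum_linear_test_mean_eq_sum_squares:
  fixes p q :: "'i \<Rightarrow> real"
  assumes "(\<Sum>i\<in>I. q i) = (\<Sum>i\<in>I. p i)" and "(\<Sum>i\<in>I. (q i)\<^sup>2) = (\<Sum>i\<in>I. (p i)\<^sup>2)"
  shows "(\<Sum>i\<in>I. (1 - 2 * p i) * (q i - p i)) = (\<Sum>i\<in>I. (q i - p i)\<^sup>2)"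
proof -
  have "(1 - 2 * p i) * (q i - p i) = (q i - p i)\<^sup>2 + (q i - p i) - ((q i)\<^sup>2 - (p i)\<^sup>2)" for i
    by (simp add: power2_eq_square algebra_simps)
  then show ?thesis
    using assms by (simp add: sum.distrib sum_subtractf)
qed

lemma ex_independent_subset:
  fixes X :: "'a set" and adj :: "'a \<Rightarrow> 'a \<Rightarrow> bool"
  assumes "finite X" and adj_sym: "\<And>x y. adj x y \<Longrightarrow> adj y x" and adj_refl: "\<And>x. adj x x"
    and degree: "\<And>x. x \<in> X \<Longrightarrow> card {y \<in> X. adj x y} \<le> B"
  shows "\<exists>S \<subseteq> X. card X \<le> B * card S \<and> (\<forall>x\<in>S. \<forall>y\<in>S. x \<noteq> y \<longrightarrow> \<not> adj x y)"
  using assms(1) degree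
proof (induction "card X" arbitrary: X rule: less_induct)
  case less
  show ?case
  proof (cases "X = {}")
    case False
    then obtain x where x: "x \<in> X" by auto
    define X' where "X' = X - {y \<in> X. adj x y}"
    have "X' \<subset> X" using x adj_refl by (auto simp: X'_def)
    then have "card X' < card X" and "finite X'"
      using less.prems(1) by (auto intro: psubset_card_mono finite_subset)
    moreover have "card {y \<in> X'. adj z y} \<le> B" if "z \<in> X'" for z
    proof -
      have "card {y \<in> X'. adj z y} \<le> card {y \<in> X. adj z y}"
        using less.prems(1) \<open>X' \<subset> X\<close> by (intro card_mono) auto
      also have "\<dots> \<le> B" using less.prems(2) \<open>X' \<subset> X\<close> that by auto
      finally show ?thesis .
    qed
    ultimately have "\<exists>S \<subseteq> X'. card X' \<le> B * card S \<and> (\<forall>u\<in>S. \<forall>v\<in>S. u \<noteq> v \<longrightarrow> \<not> adj u v)"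
      by (rule less.hyps)
    then obtain S where S: "S \<subseteq> X'" "card X' \<le> B * card S"
        "\<forall>u\<in>S. \<forall>v\<in>S. u \<noteq> v \<longrightarrow> \<not> adj u v"
      by blast
    have "x \<notin> S" using S(1) adj_refl by (auto simp: X'_def)
    have "finite S" using S(1) \<open>finite X'\<close> by (rule finite_subset)
    have "X \<subseteq> X' \<union> {y \<in> X. adj x y}" by (auto simp: X'_def)
    then have "card X \<le> card X' + card {y \<in> X. adj x y}"
      using card_mono[of "X' \<union> {y \<in> X. adj x y}" X] card_Un_le[of X' "{y \<in> X. adj x y}"]
        \<open>finite X'\<close> less.prems(1) by simp
    also have "\<dots> \<le> B * card (insert x S)"
      using S(2) less.prems(2)[OF x] \<open>x \<notin> S\<close> \<open>finite S\<close> by simp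
    finally have "card X \<le> B * card (insert x S)" .
    moreover have "insert x S \<subseteq> X" using S(1) x by (auto simp: X'_def)
    moreover have "\<forall>u\<in>insert x S. \<forall>v\<in>insert x S. u \<noteq> v \<longrightarrow> \<not> adj u v"
      using S adj_sym unfolding X'_def by blast
    ultimately show ?thesis by blast
  qed auto
qed

definition hamming_dist :: "nat \<Rightarrow> (nat \<Rightarrow> 'a) \<Rightarrow> (nat \<Rightarrow> 'a) \<Rightarrow> nat" where
  "hamming_dist n c c' = card {i \<in> {..<n}. c i \<noteq> c' i}"

lemma hamming_dist_self [simp]: "hamming_dist n c c = 0"
  by (simp add: hamming_dist_def)

lemma hamming_dist_sym: "hamming_dist n c c' = hamming_dist n c' c"
proof -
  have "{i \<in> {..<n}. c i \<noteq> c' i} = {i \<in> {..<n}. c' i \<noteq> c i}" by auto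
  then show ?thesis by (simp add: hamming_dist_def)
qed

lemma card_subsets_card_less_le:
  assumes "n \<ge> 1"
  shows "card {D. D \<subseteq> {..<n} \<and> card D < R} \<le> R * n ^ R"
proof -
  have "{D. D \<subseteq> {..<n} \<and> card D < R} = (\<Union>k<R. {D. D \<subseteq> {..<n} \<and> card D = k})"
    by auto
  then have "card {D. D \<subseteq> {..<n} \<and> card D < R} \<le> (\<Sum>k<R. n choose k)"
    using card_UN_le[of "{..<R}" "\<lambda>k. {D. D \<subseteq> {..<n} \<and> card D = k}"] by (simp add: n_subsets)
  also have "\<dots> \<le> (\<Sum>k<R. n ^ R)"
  proof (intro sum_mono)
    fix k assume "k \<in> {..<R}"
    then have "n ^ k \<le> n ^ R" using assms by (intro power_increasing) auto
    moreover have "n choose k \<le> n ^ k"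
      by (cases "k \<le> n") (simp_all add: binomial_le_pow binomial_eq_0)
    ultimately show "n choose k \<le> n ^ R" by linarith
  qed
  finally show ?thesis by simp
qed

lemma card_hamming_ball_le:
  assumes c: "c \<in> {..<n} \<rightarrow>\<^sub>E {..<M}" and "n \<ge> 1" "M \<ge> 1"
  shows "card {c' \<in> {..<n} \<rightarrow>\<^sub>E {..<M}. hamming_dist n c' c < R} \<le> R * n ^ R * M ^ R"
proof -
  define Ds where "Ds = {D. D \<subseteq> {..<n} \<and> card D < R}"
  define patch where "patch D g i = (if i \<in> D then g i else c i)" for D and g :: "nat \<Rightarrow> nat" and i
  have "finite Ds" by (auto simp: Ds_def)
  have finite_D: "finite D" if "D \<in> Ds" for D
    using that finite_subset[of D "{..<n}"] by (simp add: Ds_def)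
  have ball: "{c' \<in> {..<n} \<rightarrow>\<^sub>E {..<M}. hamming_dist n c' c < R} \<subseteq> (\<Union>D\<in>Ds. patch D ` (D \<rightarrow>\<^sub>E {..<M}))"
  proof
    fix c' assume c': "c' \<in> {c' \<in> {..<n} \<rightarrow>\<^sub>E {..<M}. hamming_dist n c' c < R}"
    define D where "D = {i \<in> {..<n}. c' i \<noteq> c i}"
    have "c' i = c i" if "i \<notin> D" for i
    proof (cases "i < n")
      case False
      then show ?thesis using PiE_arb[OF c] PiE_arb[of c' "{..<n}" "\<lambda>_. {..<M}"] c' by simp
    qed (use that in \<open>simp add: D_def\<close>)
    then have "c' = patch D (restrict c' D)"
      by (auto simp: patch_def)
    moreover have "D \<in> Ds" "restrict c' D \<in> D \<rightarrow>\<^sub>E {..<M}"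
      using c' by (auto simp: D_def Ds_def hamming_dist_def)
    ultimately show "c' \<in> (\<Union>D\<in>Ds. patch D ` (D \<rightarrow>\<^sub>E {..<M}))" by blast
  qed
  have "card (patch D ` (D \<rightarrow>\<^sub>E {..<M})) \<le> M ^ R" if "D \<in> Ds" for D
  proof -
    have "finite D" "card D \<le> R"
      using finite_D[OF that] that by (simp_all add: Ds_def)
    then have "card (D \<rightarrow>\<^sub>E {..<M}) \<le> M ^ R"
      using \<open>M \<ge> 1\<close> by (simp add: card_PiE power_increasing)
    then show ?thesis using card_image_le[of "D \<rightarrow>\<^sub>E {..<M}" "patch D"] \<open>finite D\<close>
      by (simp add: finite_PiE)
  qed
  then have "(\<Sum>D\<in>Ds. card (patch D ` (D \<rightarrow>\<^sub>E {..<M}))) \<le> card Ds * M ^ R"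
    using sum_bounded_above[of Ds "\<lambda>D. card (patch D ` (D \<rightarrow>\<^sub>E {..<M}))" "M ^ R"] by simp
  then have "card (\<Union>D\<in>Ds. patch D ` (D \<rightarrow>\<^sub>E {..<M})) \<le> card Ds * M ^ R"
    using card_UN_le[OF \<open>finite Ds\<close>] by (rule le_trans[rotated])
  also have "\<dots> \<le> R * n ^ R * M ^ R"
    using card_subsets_card_less_le[OF \<open>n \<ge> 1\<close>, of R] by (simp add: Ds_def)
  finally show ?thesis
    using card_mono[OF _ ball] \<open>finite Ds\<close> finite_D by (simp add: finite_PiE)
qed

lemma ex_large_equal_moment_class:
  fixes n M :: nat
  shows "\<exists>T \<subseteq> {..<n} \<rightarrow>\<^sub>E {..<M}. M ^ n \<le> (n * M + 1) * (n * M * M + 1) * card T \<and>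
           (\<exists>s t. \<forall>c\<in>T. (\<Sum>i<n. c i) = s \<and> (\<Sum>i<n. (c i)\<^sup>2) = t)"
proof -
  define words where "words = {..<n} \<rightarrow>\<^sub>E {..<M}"
  define moments where "moments c = ((\<Sum>i<n. c i), (\<Sum>i<n. (c i)\<^sup>2))" for c :: "nat \<Rightarrow> nat"
  have "finite words" by (simp add: words_def finite_PiE)
  have "moments \<in> words \<rightarrow> {..n * M} \<times> {..n * M * M}"
  proof
    fix c assume "c \<in> words"
    then have bound: "c i \<le> M" if "i \<in> {..<n}" for i
      using that by (auto simp: words_def PiE_iff less_imp_le)
    have "(\<Sum>i<n. c i) \<le> (\<Sum>i<n. M)"
      by (rule sum_mono) (rule bound)
    moreover have "(\<Sum>i<n. (c i)\<^sup>2) \<le> (\<Sum>i<n. M * M)"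
      by (rule sum_mono) (simp add: power2_eq_square bound mult_le_mono)
    ultimately show "moments c \<in> {..n * M} \<times> {..n * M * M}"
      by (simp add: moments_def mult.assoc)
  qed
  then have "\<exists>k \<in> {..n * M} \<times> {..n * M * M}.
      card words \<le> card (moments -` {k} \<inter> words) * card ({..n * M} \<times> {..n * M * M})"
    by (rule pigeonhole_card) (use \<open>finite words\<close> in auto)
  then obtain s t where "card words \<le> card (moments -` {(s, t)} \<inter> words) * card ({..n * M} \<times> {..n * M * M})"
    by blast
  then have "M ^ n \<le> (n * M + 1) * (n * M * M + 1) * card (moments -` {(s, t)} \<inter> words)"
    by (simp add: words_def card_PiE card_cartesian_product mult.commute)
  moreover have "moments -` {(s, t)} \<inter> words \<subseteq> {..<n} \<rightarrow>\<^sub>E {..<M}"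
    by (auto simp: words_def)
  moreover have "\<forall>c \<in> moments -` {(s, t)} \<inter> words. (\<Sum>i<n. c i) = s \<and> (\<Sum>i<n. (c i)\<^sup>2) = t"
    by (simp add: moments_def)
  ultimately show ?thesis by blast
qed

lemma ex_subcode_min_distance:
  fixes n M R :: nat
  assumes T: "T \<subseteq> {..<n} \<rightarrow>\<^sub>E {..<M}" and "n \<ge> 1" "M \<ge> 1" "R \<ge> 1"
  shows "\<exists>C \<subseteq> T. card T \<le> R * n ^ R * M ^ R * card C \<and>
           (\<forall>c\<in>C. \<forall>c'\<in>C. c \<noteq> c' \<longrightarrow> R \<le> hamming_dist n c c')"
proof -
  have "finite T" using T by (rule finite_subset) (simp add: finite_PiE)
  have degree: "card {y \<in> T. hamming_dist n c y < R} \<le> R * n ^ R * M ^ R" if "c \<in> T" for c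
  proof -
    have "{y \<in> T. hamming_dist n c y < R} \<subseteq> {y \<in> {..<n} \<rightarrow>\<^sub>E {..<M}. hamming_dist n y c < R}"
      using T by (auto simp: hamming_dist_sym)
    then have "card {y \<in> T. hamming_dist n c y < R} \<le> card {y \<in> {..<n} \<rightarrow>\<^sub>E {..<M}. hamming_dist n y c < R}"
      by (rule card_mono[rotated]) (simp add: finite_PiE)
    also have "\<dots> \<le> R * n ^ R * M ^ R"
      by (rule card_hamming_ball_le) (use that T assms in auto)
    finally show ?thesis .
  qed
  have "\<exists>C \<subseteq> T. card T \<le> R * n ^ R * M ^ R * card C \<and>
      (\<forall>c\<in>C. \<forall>c'\<in>C. c \<noteq> c' \<longrightarrow> \<not> hamming_dist n c c' < R)"
    by (rule ex_independent_subset[OF \<open>finite T\<close>])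
      (use \<open>R \<ge> 1\<close> degree in \<open>simp_all add: hamming_dist_sym\<close>)
  then show ?thesis by (simp add: not_less)
qed

lemma ex_equal_moment_code:
  fixes n M R :: nat
  assumes "n \<ge> 1" "M \<ge> 1" "R \<ge> 1"
  shows "\<exists>C \<subseteq> {..<n} \<rightarrow>\<^sub>E {..<M}.
           M ^ n \<le> (n * M + 1) * (n * M * M + 1) * (R * n ^ R * M ^ R) * card C \<and>
           (\<forall>c\<in>C. \<forall>c'\<in>C. c \<noteq> c' \<longrightarrow> R \<le> hamming_dist n c c') \<and>
           (\<exists>s t. \<forall>c\<in>C. (\<Sum>i<n. c i) = s \<and> (\<Sum>i<n. (c i)\<^sup>2) = t)"
proof -
  obtain T s t where T: "T \<subseteq> {..<n} \<rightarrow>\<^sub>E {..<M}" "M ^ n \<le> (n * M + 1) * (n * M * M + 1) * card T"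
      "\<forall>c\<in>T. (\<Sum>i<n. c i) = s \<and> (\<Sum>i<n. (c i)\<^sup>2) = t"
    using ex_large_equal_moment_class[of n M] by blast
  obtain C where C: "C \<subseteq> T" "card T \<le> R * n ^ R * M ^ R * card C"
      "\<forall>c\<in>C. \<forall>c'\<in>C. c \<noteq> c' \<longrightarrow> R \<le> hamming_dist n c c'"
    using ex_subcode_min_distance[OF T(1) assms] by blast
  note T(2)
  also have "(n * M + 1) * (n * M * M + 1) * card T \<le> (n * M + 1) * (n * M * M + 1) * (R * n ^ R * M ^ R * card C)"
    using C(2) by (rule mult_le_mono2)
  finally show ?thesis
    using C T by (intro exI[of _ C] conjI exI[of _ s] exI[of _ t]) (auto simp only: mult.assoc)
qed

definition grid :: "real \<Rightarrow> real \<Rightarrow> (nat \<Rightarrow> nat) \<Rightarrow> nat \<Rightarrow> real" where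
  "grid a h c i = a + h * c i"

lemma grid_mem:
  fixes c :: "nat \<Rightarrow> nat" and M :: nat
  assumes "c \<in> {..<n} \<rightarrow>\<^sub>E {..<M}" "i < n" "a \<le> b" "M \<ge> 1"
  shows "grid a ((b - a) / M) c i \<in> {a..b}"
proof -
  have "real (c i) \<le> M" using assms(1,2) by (auto simp: PiE_iff less_imp_le)
  then have "(b - a) / M * c i \<le> (b - a) / M * M"
    using assms(3) by (intro mult_left_mono) auto
  then show ?thesis using assms(3,4) by (simp add: grid_def)
qed

lemma grid_test_mean_ge_hamming_dist:
  fixes a h :: real and c c' :: "nat \<Rightarrow> nat"
  assumes sum_eq: "(\<Sum>i<n. c i) = (\<Sum>i<n. c' i)" and sum_sq_eq: "(\<Sum>i<n. (c i)\<^sup>2) = (\<Sum>i<n. (c' i)\<^sup>2)"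
  defines "p \<equiv> grid a h c" and "p' \<equiv> grid a h c'"
  shows "hamming_dist n c c' * h\<^sup>2 \<le> (\<Sum>i<n. (1 - 2 * p i) * (p' i - p i))"
proof -
  have real_sum_eq: "(\<Sum>i<n. real (c i)) = (\<Sum>i<n. real (c' i))"
    using arg_cong[OF sum_eq, of real] by simp
  have real_sum_sq_eq: "(\<Sum>i<n. (real (c i))\<^sup>2) = (\<Sum>i<n. (real (c' i))\<^sup>2)"
    using arg_cong[OF sum_sq_eq, of real] by simp
  have "(\<Sum>i<n. p' i) = (\<Sum>i<n. p i)"
    using real_sum_eq by (simp add: p_def p'_def grid_def sum.distrib flip: sum_distrib_left)
  moreover have "(\<Sum>i<n. (p' i)\<^sup>2) = (\<Sum>i<n. (p i)\<^sup>2)"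
    using real_sum_eq real_sum_sq_eq
    by (simp add: p_def p'_def grid_def power2_sum power_mult_distrib sum.distrib mult.assoc
        flip: sum_distrib_left)
  ultimately have "(\<Sum>i<n. (1 - 2 * p i) * (p' i - p i)) = (\<Sum>i<n. (p' i - p i)\<^sup>2)"
    by (rule sum_linear_test_mean_eq_sum_squares)
  also have "\<dots> = (\<Sum>i<n. h\<^sup>2 * (real (c' i) - real (c i))\<^sup>2)"
    by (simp add: p_def p'_def grid_def power_mult_distrib flip: right_diff_distrib)
  also have "\<dots> \<ge> (\<Sum>i \<in> {i \<in> {..<n}. c i \<noteq> c' i}. h\<^sup>2)"
  proof (rule order_trans[OF sum_mono sum_mono2])
    fix i assume "i \<in> {i \<in> {..<n}. c i \<noteq> c' i}"
    then have "1 \<le> \<bar>real (c' i) - real (c i)\<bar>" by auto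
    then have "1 \<le> (real (c' i) - real (c i))\<^sup>2"
      by (metis abs_ge_self le_less_trans linorder_not_less one_le_power power2_abs)
    then show "h\<^sup>2 \<le> h\<^sup>2 * (real (c' i) - real (c i))\<^sup>2"
      using mult_left_mono[of 1 _ "h\<^sup>2"] by simp
  qed auto
  finally show ?thesis by (simp add: hamming_dist_def)
qed

lemma
  assumes "channel MX MY W" and "x \<in> space MX"
  shows channel_prob_space: "prob_space (W x)" and channel_sets: "sets (W x) = sets MY"
  using measurable_space[OF assms[unfolded channel_def]] by (auto simp: space_prob_algebra)

lemma card_le_N_DI:
  assumes "finite C"
    and "\<And>c. c \<in> C \<Longrightarrow> u c \<in> {..<n} \<rightarrow>\<^sub>E space MX"
    and "\<And>c. c \<in> C \<Longrightarrow> E c \<in> sets (PiM {..<n} (\<lambda>_. MY))"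
    and "\<And>c. c \<in> C \<Longrightarrow> measure (prod_out W n (u c)) (E c) \<ge> 1 - l1"
    and "\<And>c c'. c \<in> C \<Longrightarrow> c' \<in> C \<Longrightarrow> c \<noteq> c' \<Longrightarrow> measure (prod_out W n (u c)) (E c') \<le> l2"
  shows "enat (card C) \<le> N_DI MX MY W n l1 l2"
proof -
  obtain enum where enum: "bij_betw enum {0..<card C} C"
    using ex_bij_betw_nat_finite[OF \<open>finite C\<close>] by blast
  then have "enum j \<in> C" if "j < card C" for j
    using bij_betwE[OF enum] that by simp
  moreover have "enum j \<noteq> enum k" if "j < card C" "k < card C" "j \<noteq> k" for j k
    using enum that by (auto simp: bij_betw_def inj_on_def)
  ultimately have "DI_code MX MY W n (card C) l1 l2 (u \<circ> enum) (E \<circ> enum)"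
    unfolding DI_code_def using assms by simp
  then show ?thesis
    unfolding N_DI_def by (intro Sup_upper) blast
qed

lemma card_equal_moment_code_le_N_DI:
  fixes W :: "'a \<Rightarrow> 'b measure" and \<xi> :: "real \<Rightarrow> 'a" and C :: "(nat \<Rightarrow> nat) set"
  assumes ch: "channel MX MY W"
    and \<xi>: "\<And>p. p \<in> {a..b} \<Longrightarrow> \<xi> p \<in> space MX \<and> measure (W (\<xi> p)) A = p"
    and A: "A \<in> sets MY" and ab: "0 \<le> a" "a < b" "b \<le> 1" and "n \<ge> 1" "M \<ge> 1" "\<theta> \<ge> 0"
    and C: "C \<subseteq> {..<n} \<rightarrow>\<^sub>E {..<M}"
    and distance: "\<And>c c'. c \<in> C \<Longrightarrow> c' \<in> C \<Longrightarrow> c \<noteq> c' \<Longrightarrow> R \<le> hamming_dist n c c'"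
    and moments: "\<And>c. c \<in> C \<Longrightarrow> (\<Sum>i<n. c i) = s \<and> (\<Sum>i<n. (c i)\<^sup>2) = t"
    and threshold: "2 * \<theta> \<le> R * ((b - a) / M)\<^sup>2"
    and l1: "exp (- \<theta>\<^sup>2 / (2 * real n)) \<le> l1" and l2: "exp (- \<theta>\<^sup>2 / (2 * real n)) \<le> l2"
  shows "enat (card C) \<le> N_DI MX MY W n l1 l2"
proof -
  define q where "q = grid a ((b - a) / M)"
  define u where "u c = (\<lambda>i\<in>{..<n}. \<xi> (q c i))" for c
  define E where "E c = {\<omega> \<in> space (PiM {..<n} (\<lambda>_. MY)). test_stat A (q c) n \<omega> < \<theta>}" for c
  have q: "q c i \<in> {a..b}" if "c \<in> C" "i < n" for c i
    unfolding q_def using C that ab \<open>M \<ge> 1\<close> by (intro grid_mem) auto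
  then have q01: "q c i \<in> {0..1}" if "c \<in> C" "i < n" for c i
    using q[OF that] ab by auto
  have \<xi>_q: "\<xi> (q c i) \<in> space MX" "measure (W (\<xi> (q c i))) A = q c i" if "c \<in> C" "i < n" for c i
    using \<xi> q that by auto
  note outputs = channel_prob_space[OF ch \<xi>_q(1)] channel_sets[OF ch \<xi>_q(1)]
  have prod_out: "prod_out W n (u c) = PiM {..<n} (\<lambda>i. W (\<xi> (q c i)))" for c
    unfolding prod_out_def u_def by (rule PiM_cong) auto
  show ?thesis
  proof (rule card_le_N_DI)
    show "finite C" using C by (rule finite_subset) (simp add: finite_PiE)
    show "u c \<in> {..<n} \<rightarrow>\<^sub>E space MX" if "c \<in> C" for c
      using \<xi>_q(1)[OF that] by (simp add: u_def)
    show "E c \<in> sets (PiM {..<n} (\<lambda>_. MY))" for c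
      using A by (simp add: E_def)
    show "1 - l1 \<le> measure (prod_out W n (u c)) (E c)" if "c \<in> C" for c
    proof -
      have "1 - exp (- \<theta>\<^sup>2 / (2 * real n)) \<le> measure (PiM {..<n} (\<lambda>i. W (\<xi> (q c i)))) (E c)"
        unfolding E_def by (rule test_stat_less_prob_ge)
          (use outputs[OF that] \<xi>_q(2)[OF that] A \<open>n \<ge> 1\<close> \<open>\<theta> \<ge> 0\<close> in auto)
      then show ?thesis using l1 by (simp add: prod_out)
    qed
    show "measure (prod_out W n (u c)) (E c') \<le> l2" if "c \<in> C" "c' \<in> C" "c \<noteq> c'" for c c'
    proof -
      have "2 * \<theta> \<le> hamming_dist n c' c * ((b - a) / M)\<^sup>2"
        using threshold distance[OF that(2,1)] that(3)
        by (elim order_trans) (intro mult_right_mono, auto)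
      also have "\<dots> \<le> (\<Sum>i<n. (1 - 2 * q c' i) * (q c i - q c' i))"
        unfolding q_def by (rule grid_test_mean_ge_hamming_dist) (use moments that in auto)
      also have "\<dots> = (\<Sum>i<n. (1 - 2 * q c' i) * (measure (W (\<xi> (q c i))) A - q c' i))"
        by (rule sum.cong) (simp_all add: \<xi>_q(2)[OF that(1)])
      finally have "2 * \<theta> \<le> \<dots>" .
      then have "measure (PiM {..<n} (\<lambda>i. W (\<xi> (q c i)))) (E c') \<le> exp (- \<theta>\<^sup>2 / (2 * real n))"
        unfolding E_def by (intro test_stat_less_prob_le)
          (use outputs[OF that(1)] q01[OF that(2)] A \<open>n \<ge> 1\<close> \<open>\<theta> \<ge> 0\<close> in auto)
      then show ?thesis using l2 by (simp add: prod_out)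
    qed
  qed
qed

lemma measure_diff_le_tv_dist:
  assumes "prob_space P" "prob_space Q" "A \<in> sets MY"
  shows "\<bar>measure P A - measure Q A\<bar> \<le> tv_dist MY P Q"
  unfolding tv_dist_def
proof (rule cSUP_upper[OF \<open>A \<in> sets MY\<close>])
  have "\<bar>measure P B - measure Q B\<bar> \<le> 1" for B
    using prob_space.prob_le_1[OF assms(1), of B] prob_space.prob_le_1[OF assms(2), of B]
      measure_nonneg[of P B] measure_nonneg[of Q B] by linarith
  then show "bdd_above ((\<lambda>B. \<bar>measure P B - measure Q B\<bar>) ` sets MY)"
    by (intro bdd_aboveI[of _ 1]) auto
qed

lemma ex_measure_neq:
  assumes "prob_space P" "prob_space Q" "sets P = sets MY" "sets Q = sets MY" "P \<noteq> Q"
  shows "\<exists>A \<in> sets MY. measure P A \<noteq> measure Q A"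
proof (rule ccontr)
  interpret P: prob_space P by fact
  interpret Q: prob_space Q by fact
  assume "\<not> ?thesis"
  then have "emeasure P A = emeasure Q A" if "A \<in> sets P" for A
    using that assms by (simp add: P.emeasure_eq_measure Q.emeasure_eq_measure)
  then have "P = Q" using assms by (intro measure_eqI) auto
  then show False using \<open>P \<noteq> Q\<close> by simp
qed

lemma continuous_on_measure_tv_continuous:
  fixes P :: "real \<Rightarrow> 'b measure"
  assumes P: "\<And>t. t \<in> {0..1} \<Longrightarrow> prob_space (P t)" and "A \<in> sets MY"
    and cont: "\<forall>t\<in>{0..1}. \<forall>\<epsilon>>0. \<exists>\<delta>>0. \<forall>s\<in>{0..1}. \<bar>s - t\<bar> < \<delta> \<longrightarrow> tv_dist MY (P s) (P t) < \<epsilon>"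
  shows "continuous_on {0..1} (\<lambda>t. measure (P t) A)"
  unfolding continuous_on_iff dist_real_def
proof (intro ballI allI impI)
  fix t \<epsilon> :: real assume "t \<in> {0..1}" "\<epsilon> > 0"
  then obtain \<delta> where "\<delta> > 0" "\<forall>s\<in>{0..1}. \<bar>s - t\<bar> < \<delta> \<longrightarrow> tv_dist MY (P s) (P t) < \<epsilon>"
    using cont by blast
  moreover have "\<bar>measure (P s) A - measure (P t) A\<bar> \<le> tv_dist MY (P s) (P t)" if "s \<in> {0..1}" for s
    using measure_diff_le_tv_dist P that \<open>t \<in> {0..1}\<close> \<open>A \<in> sets MY\<close> by blast
  ultimately show "\<exists>\<delta>>0. \<forall>s\<in>{0..1}. \<bar>s - t\<bar> < \<delta> \<longrightarrow> \<bar>measure (P s) A - measure (P t) A\<bar> < \<epsilon>"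
    by (meson le_less_trans)
qed

lemma curve_gives_interval_of_inputs:
  fixes W :: "'a \<Rightarrow> 'b measure" and x :: "real \<Rightarrow> 'a"
  assumes ch: "channel MX MY W" and x: "\<forall>t\<in>{0..1}. x t \<in> space MX"
    and cont: "\<forall>t\<in>{0..1}. \<forall>\<epsilon>>0. \<exists>\<delta>>0. \<forall>s\<in>{0..1}.
           \<bar>s - t\<bar> < \<delta> \<longrightarrow> tv_dist MY (W (x s)) (W (x t)) < \<epsilon>"
    and "W (x 0) \<noteq> W (x 1)"
  obtains A a b \<xi> where "A \<in> sets MY" "0 \<le> a" "a < b" "b \<le> 1"
    "\<And>p. p \<in> {a..b} \<Longrightarrow> \<xi> p \<in> space MX \<and> measure (W (\<xi> p)) A = p"
proof -
  note outputs = channel_prob_space[OF ch] channel_sets[OF ch]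
  obtain A where A: "A \<in> sets MY" "measure (W (x 0)) A \<noteq> measure (W (x 1)) A"
    using ex_measure_neq[of "W (x 0)" "W (x 1)" MY] outputs x \<open>W (x 0) \<noteq> W (x 1)\<close> by auto
  define f where "f t = measure (W (x t)) A" for t
  have f_bounds: "0 \<le> f t \<and> f t \<le> 1" if "t \<in> {0..1}" for t
    using prob_space.prob_le_1[OF outputs(1)] x that by (simp add: f_def)
  have "continuous_on {0..1} f"
    unfolding f_def using outputs(1) x A(1) cont by (intro continuous_on_measure_tv_continuous) auto
  define a where "a = min (f 0) (f 1)"
  define b where "b = max (f 0) (f 1)"
  have ivt: "\<exists>t. t \<in> {0..1} \<and> f t = p" if "p \<in> {a..b}" for p
  proof (cases "f 0 \<le> f 1")
    case True
    then show ?thesis using IVT'[of f 0 p 1] \<open>continuous_on {0..1} f\<close> that by (auto simp: a_def b_def)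
  next
    case False
    then show ?thesis using IVT2'[of f 1 p 0] \<open>continuous_on {0..1} f\<close> that by (auto simp: a_def b_def)
  qed
  define \<tau> where "\<tau> p = (SOME t. t \<in> {0..1} \<and> f t = p)" for p
  have "\<tau> p \<in> {0..1} \<and> f (\<tau> p) = p" if "p \<in> {a..b}" for p
    unfolding \<tau>_def by (rule someI_ex) (rule ivt[OF that])
  then have "x (\<tau> p) \<in> space MX \<and> measure (W (x (\<tau> p))) A = p" if "p \<in> {a..b}" for p
    using that x by (auto simp: f_def)
  moreover have "0 \<le> a" "a < b" "b \<le> 1"
    using f_bounds[of 0] f_bounds[of 1] A(2) by (auto simp: a_def b_def f_def)
  ultimately show ?thesis
    using that[of A a b "\<lambda>p. x (\<tau> p)"] A(1) by blast
qed

lemma code_size_factor_le: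
  fixes n M R :: nat
  assumes "2 \<le> n" "1 \<le> M" "M \<le> n"
  shows "(n * M + 1) * (n * M * M + 1) * (R * n ^ R * M ^ R) \<le> n ^ (3 * R + 7)"
proof -
  have "1 \<le> n * n" "1 \<le> n * n * n" "n * M \<le> n * n" "n * M * M \<le> n * n * n"
    using assms by (simp_all add: mult_le_mono one_le_mult_iff)
  moreover have double: "2 * m \<le> m * n" for m
    using assms(1) by simp
  ultimately have "n * M + 1 \<le> n * n * n" "n * M * M + 1 \<le> n * n * n * n"
    using double[of "n * n"] double[of "n * n * n"] by linarith+
  moreover have "R \<le> n ^ R"
    using less_exp[of R] power_mono[of 2 n R] assms(1) by linarith
  moreover have "M ^ R \<le> n ^ R"
    using assms(3) by (rule power_mono) simp
  ultimately have "(n * M + 1) * (n * M * M + 1) * (R * n ^ R * M ^ R)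
      \<le> n ^ 3 * n ^ 4 * (n ^ R * n ^ R * n ^ R)"
    by (intro mult_le_mono) (auto simp: power3_eq_cube power4_eq_xxxx)
  also have "\<dots> = n ^ (3 + 4 + (R + R + R))"
    by (simp only: power_add)
  also have "\<dots> = n ^ (3 * R + 7)"
    by (simp add: add.commute)
  finally show ?thesis .
qed

lemma DI_rate_ge_log_ratio:
  fixes n M N k :: nat
  assumes N: "enat N \<le> N_DI MX MY W n l1 l2" and size: "M ^ n \<le> n ^ k * N"
    and "1 \<le> M" "2 \<le> n"
  shows "ereal ((n * log 2 M - k * log 2 n) / (n * log 2 n)) \<le> DI_rate MX MY W n l1 l2"
proof -
  have "N > 0"
    using size \<open>1 \<le> M\<close> by (cases N) auto
  have "n * log 2 M = log 2 (real (M ^ n))"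
    using \<open>1 \<le> M\<close> by (simp add: log_nat_power)
  also have "\<dots> \<le> log 2 (real (n ^ k * N))"
    using size \<open>1 \<le> M\<close> by (intro log_mono) (auto simp del: of_nat_mult of_nat_power)
  also have "\<dots> = k * log 2 n + log 2 N"
    using \<open>N > 0\<close> \<open>2 \<le> n\<close> by (simp add: log_mult log_nat_power)
  finally have "n * log 2 M - k * log 2 n \<le> log 2 N" by simp
  then have "(n * log 2 M - k * log 2 n) / (n * log 2 n) \<le> log 2 N' / (n * log 2 n)"
    if "N \<le> N'" for N'
  proof -
    have "log 2 N \<le> log 2 N'" using that \<open>N > 0\<close> by (intro log_mono) auto
    then show ?thesis
      using \<open>n * log 2 M - k * log 2 n \<le> log 2 N\<close> \<open>2 \<le> n\<close> by (intro divide_right_mono) auto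
  qed
  then show ?thesis
    using N by (cases "N_DI MX MY W n l1 l2") (auto simp: DI_rate_def)
qed

lemma DI_rate_ge_equal_moment_code:
  fixes W :: "'a \<Rightarrow> 'b measure" and \<xi> :: "real \<Rightarrow> 'a" and n M R :: nat
  assumes ch: "channel MX MY W"
    and \<xi>: "\<And>p. p \<in> {a..b} \<Longrightarrow> \<xi> p \<in> space MX \<and> measure (W (\<xi> p)) A = p"
    and A: "A \<in> sets MY" and ab: "0 \<le> a" "a < b" "b \<le> 1"
    and "2 \<le> n" "1 \<le> M" "M \<le> n" "1 \<le> R" "\<theta> \<ge> 0"
    and threshold: "2 * \<theta> \<le> R * ((b - a) / M)\<^sup>2"
    and l1: "exp (- \<theta>\<^sup>2 / (2 * real n)) \<le> l1" and l2: "exp (- \<theta>\<^sup>2 / (2 * real n)) \<le> l2"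
  shows "ereal ((n * log 2 M - real (3 * R + 7) * log 2 n) / (n * log 2 n)) \<le> DI_rate MX MY W n l1 l2"
proof -
  obtain C s t where C: "C \<subseteq> {..<n} \<rightarrow>\<^sub>E {..<M}"
      "M ^ n \<le> (n * M + 1) * (n * M * M + 1) * (R * n ^ R * M ^ R) * card C"
      "\<forall>c\<in>C. \<forall>c'\<in>C. c \<noteq> c' \<longrightarrow> R \<le> hamming_dist n c c'"
      "\<forall>c\<in>C. (\<Sum>i<n. c i) = s \<and> (\<Sum>i<n. (c i)\<^sup>2) = t"
    using ex_equal_moment_code[of n M R] assms by auto
  have "enat (card C) \<le> N_DI MX MY W n l1 l2"
    by (rule card_equal_moment_code_le_N_DI[OF ch \<xi> A ab _ _ _ C(1) _ _ threshold l1 l2])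
      (use C(3,4) assms in auto)
  moreover have "M ^ n \<le> n ^ (3 * R + 7) * card C"
    using C(2) mult_le_mono1[OF code_size_factor_le[of n M R], of "card C"] assms by linarith
  ultimately show ?thesis
    using DI_rate_ge_log_ratio assms by blast
qed

lemma grid_parameters:
  fixes e :: real and n :: nat
  assumes e: "0 < e" "e < 1/4" and n: "2 \<le> n" "3 \<le> n powr (1/4 - e)"
  defines "M \<equiv> nat \<lfloor>n powr (1/4 - e)\<rfloor>" and "R \<equiv> nat \<lceil>n powr (1 - e)\<rceil>"
  shows "1 \<le> M" "M \<le> n" "n powr (1/4 - e) - 1 \<le> M" "1 \<le> R" "R \<le> n powr (1 - e) + 1"
    and "n powr (1/2 + e) \<le> R / (real M)\<^sup>2"
proof -
  have M_bounds: "n powr (1/4 - e) - 1 \<le> M" "M \<le> n powr (1/4 - e)"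
    using n(2) by (auto simp: M_def)
  moreover have "n powr (1/4 - e) \<le> n"
    using powr_mono[of "1/4 - e" 1 n] e n(1) by simp
  ultimately show "1 \<le> M" "M \<le> n" "n powr (1/4 - e) - 1 \<le> M"
    using n(2) by linarith+
  have R_bounds: "n powr (1 - e) \<le> R" "R \<le> n powr (1 - e) + 1"
    by (auto simp: R_def)
  moreover have "0 < n powr (1 - e)"
    using n(1) by simp
  ultimately have "0 < real R" by linarith
  then show "1 \<le> R" by simp
  show "R \<le> n powr (1 - e) + 1" by (rule R_bounds(2))
  have "n powr (1/2 + e) = n powr (1 - e) / (n powr (1/4 - e))\<^sup>2"
    using n(1) by (simp add: power2_eq_square flip: powr_add powr_diff)
  also have "\<dots> \<le> R / (real M)\<^sup>2"
    using R_bounds M_bounds \<open>1 \<le> M\<close> by (intro frac_le power_mono) auto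
  finally show "n powr (1/2 + e) \<le> R / (real M)\<^sup>2" .
qed

lemma DI_rate_ge_powr_bound:
  fixes W :: "'a \<Rightarrow> 'b measure" and \<xi> :: "real \<Rightarrow> 'a" and n :: nat
  assumes ch: "channel MX MY W"
    and \<xi>: "\<And>p. p \<in> {a..b} \<Longrightarrow> \<xi> p \<in> space MX \<and> measure (W (\<xi> p)) A = p"
    and A: "A \<in> sets MY" and ab: "0 \<le> a" "a < b" "b \<le> 1"
    and e: "0 < e" "e < 1/4" and n: "2 \<le> n" "3 \<le> n powr (1/4 - e)"
    and l1: "exp (- ((b - a)\<^sup>2 * n powr (1/2 + e) / 2)\<^sup>2 / (2 * real n)) \<le> l1"
    and l2: "exp (- ((b - a)\<^sup>2 * n powr (1/2 + e) / 2)\<^sup>2 / (2 * real n)) \<le> l2"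
  shows "ereal ((n * log 2 (n powr (1/4 - e) - 1) - (3 * (n powr (1 - e) + 1) + 7) * log 2 n)
           / (n * log 2 n)) \<le> DI_rate MX MY W n l1 l2"
proof -
  define \<theta> where "\<theta> = (b - a)\<^sup>2 * n powr (1/2 + e) / 2"
  define M where "M = nat \<lfloor>n powr (1/4 - e)\<rfloor>"
  define R where "R = nat \<lceil>n powr (1 - e)\<rceil>"
  note MR = grid_parameters[OF e n, folded M_def R_def]
  have "log 2 (n powr (1/4 - e) - 1) \<le> log 2 M"
    using MR n(2) by (intro log_mono) auto
  moreover have "real (3 * R + 7) \<le> 3 * (n powr (1 - e) + 1) + 7"
    using MR by simp
  ultimately have "(n * log 2 (n powr (1/4 - e) - 1) - (3 * (n powr (1 - e) + 1) + 7) * log 2 n) / (n * log 2 n)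
      \<le> (n * log 2 M - real (3 * R + 7) * log 2 n) / (n * log 2 n)"
    using n(1) by (intro divide_right_mono diff_mono mult_left_mono mult_right_mono) auto
  also have "\<dots> \<le> DI_rate MX MY W n l1 l2"
  proof (rule DI_rate_ge_equal_moment_code[OF ch \<xi> A ab n(1) MR(1,2,4)])
    have "(b - a)\<^sup>2 * n powr (1/2 + e) \<le> (b - a)\<^sup>2 * (R / (real M)\<^sup>2)"
      using MR(6) by (rule mult_left_mono) simp
    then show "2 * \<theta> \<le> R * ((b - a) / M)\<^sup>2"
      by (simp add: \<theta>_def power_divide mult.commute)
  qed (use l1 l2 in \<open>simp_all add: \<theta>_def\<close>)
  finally show ?thesis by simp
qed

lemma liminf_DI_rate_ge:
  fixes W :: "'a \<Rightarrow> 'b measure" and \<xi> :: "real \<Rightarrow> 'a"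
  assumes ch: "channel MX MY W"
    and \<xi>: "\<And>p. p \<in> {a..b} \<Longrightarrow> \<xi> p \<in> space MX \<and> measure (W (\<xi> p)) A = p"
    and A: "A \<in> sets MY" and ab: "0 \<le> a" "a < b" "b \<le> 1"
    and "l1 > 0" "l2 > 0" and e: "0 < e" "e < 1/4"
  shows "ereal (1/4 - e) \<le> liminf (\<lambda>n. DI_rate MX MY W n l1 l2)"
proof -
  define g where "g n = (n * log 2 (n powr (1/4 - e) - 1) - (3 * (n powr (1 - e) + 1) + 7) * log 2 n)
      / (n * log 2 n)" for n :: nat
  have "(\<lambda>n. exp (- ((b - a)\<^sup>2 * n powr (1/2 + e) / 2)\<^sup>2 / (2 * real n))) \<longlonglongrightarrow> 0"
    using e ab by real_asymp
  then have "\<forall>\<^sub>F n in sequentially. exp (- ((b - a)\<^sup>2 * n powr (1/2 + e) / 2)\<^sup>2 / (2 * real n)) < min l1 l2"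
    by (rule order_tendstoD) (use \<open>l1 > 0\<close> \<open>l2 > 0\<close> in simp)
  moreover have "\<forall>\<^sub>F n in sequentially. 3 \<le> real n powr (1/4 - e)"
    using e by real_asymp
  moreover have "\<forall>\<^sub>F n in sequentially. 2 \<le> n"
    by (rule eventually_ge_at_top)
  ultimately have "\<forall>\<^sub>F n in sequentially. ereal (g n) \<le> DI_rate MX MY W n l1 l2"
    by eventually_elim (use DI_rate_ge_powr_bound[OF ch \<xi> A ab e] in \<open>auto simp: g_def\<close>)
  then have "liminf (\<lambda>n. ereal (g n)) \<le> liminf (\<lambda>n. DI_rate MX MY W n l1 l2)"
    by (rule Liminf_mono)
  moreover have "g \<longlonglongrightarrow> 1/4 - e"
    unfolding g_def using e by real_asymp
  then have "liminf (\<lambda>n. ereal (g n)) = ereal (1/4 - e)"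
    by (intro lim_imp_Liminf) auto
  ultimately show ?thesis by simp
qed

theorem corollary2:
  fixes MX :: "'a measure" and MY :: "'b measure" and W :: "'a \<Rightarrow> 'b measure"
    and x :: "real \<Rightarrow> 'a"
  assumes "channel MX MY W"
    and "\<forall>t\<in>{0..1}. x t \<in> space MX"
    and "\<forall>t\<in>{0..1}. \<forall>\<epsilon>>0. \<exists>\<delta>>0. \<forall>s\<in>{0..1}.
           \<bar>s - t\<bar> < \<delta> \<longrightarrow> tv_dist MY (W (x s)) (W (x t)) < \<epsilon>"
    and "W (x 0) \<noteq> W (x 1)"
  shows "C_DI_dot MX MY W \<ge> 1 / 4"
proof -
  obtain A a b \<xi> where curve: "A \<in> sets MY" "0 \<le> a" "a < b" "b \<le> 1"
      "\<And>p. p \<in> {a..b} \<Longrightarrow> \<xi> p \<in> space MX \<and> measure (W (\<xi> p)) A = p"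
    using curve_gives_interval_of_inputs[OF assms] by blast
  have "ereal (1/4) \<le> liminf (\<lambda>n. DI_rate MX MY W n l1 l2)" if "l1 > 0" "l2 > 0" for l1 l2
  proof (rule dense_le_bounded[of 0])
    fix w :: ereal assume "0 < w" "w < ereal (1/4)"
    then obtain r where "w = ereal r" "0 < r" "r < 1/4"
      by (cases w) auto
    then show "w \<le> liminf (\<lambda>n. DI_rate MX MY W n l1 l2)"
      using liminf_DI_rate_ge[OF assms(1) curve(5) curve(1-4) that, of "1/4 - r"] by simp
  qed simp
  moreover have "(1/4 :: ereal) = ereal (1/4)"
    by (simp add: one_ereal_def)
  ultimately show ?thesis
    unfolding C_DI_dot_def by (intro INF_greatest) auto
qed

end
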